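(* Let $q\in[0,1)$, $t\in(0,1)$, and $\Omega_n=\{\lambda \text{ partition}:\ell(\lambda)\le n\}$, where $\ell(\lambda)$ is the number of nonzero parts. Define $\eta_n(\lambda)=\ell(\lambda)-n$ and $\phi_{n,x}(\lambda)=\prod_{j\ge0}\frac{1+q^{\lambda_{n-j}}t^{j+x}}{1+t^{j+x}}$ for $x\in\mathbb R$, with the convention $q^{\lambda_{-m}}=0$ for $m\ge0$ (and $q^0=1$, including when $q=0$). Then, for every choice of probability measures on the sets $\Omega_n$, the functions $\eta_n,\phi_{n,x}$ satisfy conditions (1)–(4) below (pointwise on $\Omega_n$), and consequently $\{\ell(\lambda)-n\}_{n\ge1}$ and $\{F_n(x)=\mathbb E\prod_{j\ge0}\frac{1+q^{\lambda_{n-j}}t^{j+x}}{1+t^{j+x}}\}_{n\ge1}$ are asymptotically equivalent as $n\to\infty$. Conditions: (1) $0\le\phi_{n,x}\le\phi_{n,y}\le1$ for $x\le y$; (2) for every $\varepsilon>0$ there is $M$ with $\phi_{n,x}<\varepsilon$ whenever $\eta_n-x>M$ (uniformly in $n,x$); (3) for every $\varepsilon>0$ there is $M$ with $\phi_{n,x}>1-\varepsilon$ whenever $\eta_n-x<-M$ (uniformly in $n,x$); (4) there is $c>0$ independent of $n$ with $\phi_{n,x+1}-\phi_{n,x}\ge c$ whenever $x<\eta_n\le x+1$.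
   Context: A sequence $\{\eta_n\}_{n\ge1}$ of real random variables spreads if $\lim_{n\to\infty}\sup_{x\in\mathbb R}\mathrm{Prob}\{x<\eta_n\le x+1\}=0$. A sequence $\{F_n\}_{n\ge1}$ of non-decreasing functions $\mathbb R\to\mathbb R$ spreads if $\lim_{n\to\infty}\sup_{x\in\mathbb R}(F_n(x+1)-F_n(x))=0$. A sequence of real random variables $\{\eta_n\}$ and a sequence of non-decreasing functions $\{F_n\}$ are asymptotically equivalent if (i) $\{\eta_n\}$ spreads if and only if $\{F_n\}$ spreads, and (ii) when both spread, $\lim_{n\to\infty}\sup_{x\in\mathbb R}(\mathrm{Prob}\{\eta_n\le x\}-F_n(x))=0$. *)

theory Defs
  imports "HOL-Probability.Probability"
begin

text \<open>Partitions are represented as functions nat => nat, lambda i = i-th part (i >= 1),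
  with lambda 0 = 0 as a normalisation.  Omega_n = partitions with at most n nonzero parts.\<close>

definition partitions_le :: "nat \<Rightarrow> (nat \<Rightarrow> nat) set" where
  "partitions_le n = {lam. lam 0 = 0 \<and> (\<forall>i j. 1 \<le> i \<and> i \<le> j \<longrightarrow> lam j \<le> lam i)
                          \<and> (\<forall>i. n < i \<longrightarrow> lam i = 0)}"

definition part_length :: "(nat \<Rightarrow> nat) \<Rightarrow> nat" where
  "part_length lam = card {i. 1 \<le> i \<and> lam i \<noteq> 0}"

definition eta :: "nat \<Rightarrow> (nat \<Rightarrow> nat) \<Rightarrow> real" where
  "eta n lam = real (part_length lam) - real n"

definition phi :: "real \<Rightarrow> real \<Rightarrow> nat \<Rightarrow> real \<Rightarrow> (nat \<Rightarrow> nat) \<Rightarrow> real" where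
  "phi q t n x lam = (\<Prod>j. (1 + (if j < n then q ^ lam (n - j) else 0) * t powr (real j + x))
                            / (1 + t powr (real j + x)))"

definition spreads_rv :: "(nat \<Rightarrow> 'a pmf) \<Rightarrow> (nat \<Rightarrow> 'a \<Rightarrow> real) \<Rightarrow> bool" where
  "spreads_rv P X \<longleftrightarrow>
     (\<lambda>n. SUP x::real. measure_pmf.prob (P n) {w. x < X n w \<and> X n w \<le> x + 1}) \<longlonglongrightarrow> 0"

definition spreads_fun :: "(nat \<Rightarrow> real \<Rightarrow> real) \<Rightarrow> bool" where
  "spreads_fun F \<longleftrightarrow> (\<lambda>n. SUP x::real. F n (x + 1) - F n x) \<longlonglongrightarrow> 0"

definition asymp_equivalent :: "(nat \<Rightarrow> 'a pmf) \<Rightarrow> (nat \<Rightarrow> 'a \<Rightarrow> real) \<Rightarrow> (nat \<Rightarrow> real \<Rightarrow> real) \<Rightarrow> bool" where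
  "asymp_equivalent P X F \<longleftrightarrow>
     (spreads_rv P X \<longleftrightarrow> spreads_fun F) \<and>
     (spreads_rv P X \<and> spreads_fun F \<longrightarrow>
        (\<lambda>n. SUP x::real. measure_pmf.prob (P n) {w. X n w \<le> x} - F n x) \<longlonglongrightarrow> 0)"

end

theory Submission
  imports Defs
begin

text \<open>Writing l for the length of lam, the factors of phi with index j < n - l have
  q^{lam_{n-j}} = q^0 = 1 and equal one, so phi_{n,x}(lam) = Psi(x - eta_n(lam)) with
  Psi(y) = prod_k (1 + b_k t^{k+y}) / (1 + t^{k+y}) = qt_prod t b y and
  b_k = q^{lam_{l-k}} in [0, q].
  Conditions (1)-(4) are estimates on Psi that are uniform in the coefficients: Psi increases
  in y from 0 to 1, it is at most ((1+q)/2)^m for y <= -m, at least 1 - t^y/(1-t) for y >= 0,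
  and on [-1, 0] its first factor alone grows by a fixed amount while the remaining product
  stays above a positive constant.

  Asymptotic equivalence then holds for any family satisfying (1)-(4). By (4), the mass of a
  window x < eta_n <= x + 1 is at most (F_n(x+1) - F_n(x)) / c. Conversely, by (2) and (3) an
  increment of F_n, as well as the excess of the distribution function of eta_n over F_n, is
  at most epsilon plus the mass of boundedly many such windows.\<close>

section \<open>Uniform estimates for the product Psi\<close>

definition qt_factor :: "real \<Rightarrow> real \<Rightarrow> real \<Rightarrow> real" where
  "qt_factor t a e = (1 + a * t powr e) / (1 + t powr e)"

definition qt_prod :: "real \<Rightarrow> (nat \<Rightarrow> real) \<Rightarrow> real \<Rightarrow> real" where
  "qt_prod t b y = (\<Prod>k. qt_factor t (b k) (real k + y))"

context
  fixes t :: real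
  assumes t_pos: "0 < t" and t_less_1: "t < 1"
begin

lemma one_plus_powr_pos: "0 < 1 + t powr e"
  using t_pos by (simp add: add_pos_nonneg)

lemma qt_factor_eq: "qt_factor t a e = a + (1 - a) / (1 + t powr e)"
  using one_plus_powr_pos[of e] unfolding qt_factor_def by (simp add: field_simps)

lemma qt_factor_pos: "0 \<le> a \<Longrightarrow> 0 < qt_factor t a e"
  unfolding qt_factor_def by (intro divide_pos_pos add_pos_nonneg) auto

lemma qt_factor_one: "qt_factor t 1 e = 1"
  using one_plus_powr_pos[of e] unfolding qt_factor_def by simp

lemma qt_factor_le_one: "a \<le> 1 \<Longrightarrow> qt_factor t a e \<le> 1"
  using one_plus_powr_pos[of e] t_pos unfolding qt_factor_def by (simp add: mult_le_cancel_right1)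

lemma qt_factor_ge: "0 \<le> a \<Longrightarrow> 1 - t powr e \<le> qt_factor t a e"
proof -
  assume a: "0 \<le> a"
  have s: "0 < t powr e" using t_pos by simp
  have "(1 - t powr e) * (1 + t powr e) \<le> 1" by (simp add: algebra_simps)
  then have "1 - t powr e \<le> 1 / (1 + t powr e)"
    using one_plus_powr_pos[of e] by (simp add: pos_le_divide_eq)
  also have "\<dots> \<le> (1 + a * t powr e) / (1 + t powr e)" using a s by (intro divide_right_mono) auto
  finally show ?thesis unfolding qt_factor_def .
qed

lemma qt_factor_mono_coeff: "a \<le> a' \<Longrightarrow> qt_factor t a e \<le> qt_factor t a' e"
  using t_pos unfolding qt_factor_def
  by (intro divide_right_mono add_left_mono mult_right_mono) (auto simp: add_pos_nonneg less_imp_le)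

lemma qt_factor_mono_exp: "a \<le> 1 \<Longrightarrow> e \<le> e' \<Longrightarrow> qt_factor t a e \<le> qt_factor t a e'"
proof -
  assume a: "a \<le> 1" and e: "e \<le> e'"
  have "t powr e' \<le> t powr e" using e t_pos t_less_1 by (intro powr_mono') auto
  then have "(1 - a) / (1 + t powr e) \<le> (1 - a) / (1 + t powr e')"
    using a t_pos by (intro divide_left_mono mult_pos_pos add_pos_nonneg) auto
  then show ?thesis by (simp add: qt_factor_eq)
qed

lemma qt_factor_le_nonpos_exp:
  assumes "0 \<le> a" "a \<le> q" "q \<le> 1" "e \<le> 0"
  shows "qt_factor t a e \<le> (1 + q) / 2"
proof -
  have "t powr 0 \<le> t powr e" using assms t_pos t_less_1 by (intro powr_mono') auto
  then have "(1 - a) / (1 + t powr e) \<le> (1 - a) / 2"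
    using assms t_pos by (intro divide_left_mono) auto
  then show ?thesis using assms by (simp add: qt_factor_eq)
qed

lemma qt_factor_increment:
  assumes a: "0 \<le> a" "a \<le> q" "q < 1" and y: "-1 \<le> y" "y < 0"
  shows "(1 - q) * (1 - t) / (2 * (1 + 1 / t)) \<le> qt_factor t a (y + 1) - qt_factor t a y"
proof -
  define s where "s = t powr y"
  have s_ge: "1 \<le> s" using powr_mono'[of y 0 t] y t_pos t_less_1 by (simp add: s_def)
  have s_le: "s \<le> 1 / t"
    using powr_mono'[of "-1" y t] y t_pos t_less_1 unfolding s_def by (simp add: powr_minus_divide)
  have ts_le: "t * s \<le> 1" using s_le t_pos by (simp add: field_simps)
  have pos: "1 + t * s > 0" "1 + s > 0" using t_pos s_ge by (auto intro: add_pos_nonneg)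
  have "qt_factor t a (y + 1) - qt_factor t a y = (1 - a) * (1 / (1 + t * s) - 1 / (1 + s))"
    using t_pos by (simp add: qt_factor_eq s_def powr_add right_diff_distrib)
  also have "\<dots> = (1 - a) * ((1 - t) * s) / ((1 + t * s) * (1 + s))"
    using pos by (simp add: field_simps)
  finally have diff: "qt_factor t a (y + 1) - qt_factor t a y =
      (1 - a) * ((1 - t) * s) / ((1 + t * s) * (1 + s))" .
  have num: "(1 - q) * (1 - t) \<le> (1 - a) * ((1 - t) * s)"
    using a s_ge t_less_1 by (intro mult_mono) (auto simp: mult_le_cancel_left1)
  have den: "(1 + t * s) * (1 + s) \<le> 2 * (1 + 1 / t)"
    using ts_le s_le s_ge by (intro mult_mono) auto
  show ?thesis unfolding diff
    using pos a t_less_1 s_ge by (intro frac_le[OF _ num _ den]) auto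
qed

lemma powr_nat_plus: "t powr (real k + y) = t powr y * t ^ k"
  using t_pos by (simp add: powr_add powr_realpow mult.commute)

lemma summable_powr_geometric: "summable (\<lambda>k. t powr y * t ^ k)"
  using t_pos t_less_1 by (intro summable_mult summable_geometric) auto

lemma qt_prod_convergent:
  assumes b: "\<forall>k. b k \<in> {0..1}"
  shows "convergent_prod (\<lambda>k. qt_factor t (b k) (real k + y))"
proof -
  define z where "z k = qt_factor t (b k) (real k + y) - 1" for k
  have "\<bar>z k\<bar> \<le> t powr y * t ^ k" for k
  proof -
    have "0 \<le> b k" "b k \<le> 1" using b by auto
    then have "1 - t powr (real k + y) \<le> qt_factor t (b k) (real k + y)"
      "qt_factor t (b k) (real k + y) \<le> 1"
      by (simp_all add: qt_factor_ge qt_factor_le_one)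
    moreover have "0 \<le> t powr (real k + y)" by simp
    ultimately show ?thesis unfolding z_def abs_le_iff powr_nat_plus[symmetric] by linarith
  qed
  then have "summable (\<lambda>k. \<bar>z k\<bar>)"
    by (intro summable_comparison_test[OF _ summable_powr_geometric]) auto
  moreover have "z k \<noteq> -1" for k
  proof -
    have "0 \<le> b k" using b by auto
    then show ?thesis using qt_factor_pos[of "b k" "real k + y"] unfolding z_def by linarith
  qed
  ultimately have "convergent_prod (\<lambda>k. 1 + z k)" by (rule summable_imp_convergent_prod_real)
  then show ?thesis unfolding z_def by simp
qed

lemma qt_prod_has_prod:
  "\<forall>k. b k \<in> {0..1} \<Longrightarrow> (\<lambda>k. qt_factor t (b k) (real k + y)) has_prod qt_prod t b y"
  unfolding qt_prod_def by (rule convergent_prod_has_prod[OF qt_prod_convergent])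

lemma qt_prod_nonneg: "\<forall>k. b k \<in> {0..1} \<Longrightarrow> 0 \<le> qt_prod t b y"
  by (rule has_prod_nonneg[OF qt_prod_has_prod]) (auto intro: less_imp_le qt_factor_pos)

lemma qt_prod_le_one: "\<forall>k. b k \<in> {0..1} \<Longrightarrow> qt_prod t b y \<le> 1"
  using prod_ge_prodinf[OF qt_prod_has_prod, of b y 0]
  by (auto simp: qt_prod_def intro: less_imp_le qt_factor_pos qt_factor_le_one)

lemma qt_prod_mono:
  assumes "\<forall>k. b k \<in> {0..1}" "\<forall>k. b' k \<in> {0..1}" "\<And>k. b k \<le> b' k" "y \<le> y'"
  shows "qt_prod t b y \<le> qt_prod t b' y'"
proof -
  have "qt_factor t (b k) (real k + y) \<le> qt_factor t (b' k) (real k + y')" for k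
  proof -
    have "b' k \<le> 1" using assms(2) by auto
    then have "qt_factor t (b' k) (real k + y) \<le> qt_factor t (b' k) (real k + y')"
      using assms(4) by (intro qt_factor_mono_exp) auto
    then show ?thesis using qt_factor_mono_coeff[OF assms(3)[of k], of "real k + y"] by linarith
  qed
  then show ?thesis unfolding qt_prod_def using assms
    by (intro prodinf_le[OF qt_prod_has_prod qt_prod_has_prod])
       (auto intro: less_imp_le qt_factor_pos)
qed

lemma qt_prod_head:
  assumes b: "\<forall>k. b k \<in> {0..1}"
  shows "qt_prod t b y = qt_factor t (b 0) y * qt_prod t (\<lambda>k. b (Suc k)) (y + 1)"
proof -
  have pos: "0 < qt_factor t (b 0) y" using b by (intro qt_factor_pos) auto
  have "qt_prod t (\<lambda>k. b (Suc k)) (y + 1) = (\<Prod>k. qt_factor t (b (Suc k)) (real (Suc k) + y))"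
    unfolding qt_prod_def by (simp add: algebra_simps)
  also have "\<dots> = qt_prod t b y / qt_factor t (b 0) y"
    unfolding qt_prod_def using pos by (subst prodinf_split_head[OF qt_prod_convergent[OF b]]) auto
  finally show ?thesis using pos by simp
qed

lemma qt_prod_ge:
  assumes b: "\<forall>k. b k \<in> {0..1}" and y: "0 \<le> y"
  shows "1 - t powr y / (1 - t) \<le> qt_prod t b y"
  unfolding qt_prod_def
proof (rule LIMSEQ_le_const[OF convergent_prod_LIMSEQ[OF qt_prod_convergent[OF b]]], intro exI allI impI)
  fix n :: nat
  have le1: "t powr (real k + y) \<le> 1" for k
    using powr_mono'[of 0 "real k + y" t] y t_pos t_less_1 by simp
  have "(\<Sum>k\<le>n. t powr (real k + y)) \<le> (\<Sum>k. t powr y * t ^ k)"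
    unfolding powr_nat_plus using t_pos by (intro sum_le_suminf summable_powr_geometric) auto
  also have "\<dots> = t powr y / (1 - t)"
    using suminf_mult[OF summable_geometric, of t "t powr y"] suminf_geometric[of t] t_pos t_less_1
    by simp
  finally have "1 - t powr y / (1 - t) \<le> 1 - (\<Sum>k\<le>n. t powr (real k + y))" by simp
  also have "\<dots> \<le> (\<Prod>k\<le>n. 1 - t powr (real k + y))"
    using le1 t_pos by (intro Weierstrass_prod_ineq) auto
  also have "\<dots> \<le> (\<Prod>k\<le>n. qt_factor t (b k) (real k + y))"
    using le1 qt_factor_ge b by (intro prod_mono) auto
  finally show "1 - t powr y / (1 - t) \<le> (\<Prod>k\<le>n. qt_factor t (b k) (real k + y))" .
qed

lemma qt_prod_uniformly_pos: "\<exists>C>0. \<forall>b z. (\<forall>k. b k \<in> {0..1}) \<longrightarrow> 0 \<le> z \<longrightarrow> C \<le> qt_prod t b z"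
proof (intro exI conjI allI impI)
  show "0 < qt_prod t (\<lambda>_. 0) 0"
    by (rule has_prod_pos[OF qt_prod_has_prod]) (auto intro: qt_factor_pos)
  fix b :: "nat \<Rightarrow> real" and z :: real
  assume "\<forall>k. b k \<in> {0..1}" "0 \<le> z"
  then show "qt_prod t (\<lambda>_. 0) 0 \<le> qt_prod t b z" by (intro qt_prod_mono) auto
qed

lemma qt_prod_le_power:
  assumes b: "\<forall>k. b k \<in> {0..q}" and q: "q \<le> 1" and y: "y + real m \<le> 0"
  shows "qt_prod t b y \<le> ((1 + q) / 2) ^ m"
proof -
  have b1: "\<forall>k. b k \<in> {0..1}" using b q by (metis atLeastAtMost_iff order_trans)
  have "qt_prod t b y \<le> (\<Prod>k<m. qt_factor t (b k) (real k + y))"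
    using prod_ge_prodinf[OF qt_prod_has_prod[OF b1], where n = m] b1
    by (auto simp: qt_prod_def intro: less_imp_le qt_factor_pos qt_factor_le_one)
  also have "\<dots> \<le> (\<Prod>k<m. (1 + q) / 2)"
    using b q y by (intro prod_mono conjI less_imp_le[OF qt_factor_pos] qt_factor_le_nonpos_exp) auto
  finally show ?thesis by simp
qed

lemma qt_prod_small:
  assumes q: "0 \<le> q" "q < 1" and e: "0 < \<epsilon>"
  shows "\<exists>M. \<forall>b y. (\<forall>k. b k \<in> {0..q}) \<longrightarrow> y < - M \<longrightarrow> qt_prod t b y < \<epsilon>"
proof -
  obtain m where m: "((1 + q) / 2) ^ m < \<epsilon>" using real_arch_pow_inv[of \<epsilon> "(1 + q) / 2"] e q by auto
  have "qt_prod t b y < \<epsilon>" if "\<forall>k. b k \<in> {0..q}" "y < - real m" for b y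
    using qt_prod_le_power[OF that(1), where m = m and y = y] that(2) q m by linarith
  then show ?thesis by blast
qed

lemma qt_prod_large:
  assumes e: "0 < \<epsilon>"
  shows "\<exists>M. \<forall>b y. (\<forall>k. b k \<in> {0..1}) \<longrightarrow> M < y \<longrightarrow> 1 - \<epsilon> < qt_prod t b y"
proof -
  obtain m where m: "t ^ m < \<epsilon> * (1 - t)" using real_arch_pow_inv[of "\<epsilon> * (1 - t)" t] e t_less_1 by auto
  have "1 - \<epsilon> < qt_prod t b y" if b: "\<forall>k. b k \<in> {0..1}" and y: "real m < y" for b y
  proof -
    have "t powr y \<le> t ^ m"
      using powr_mono'[of "real m" y t] y t_pos t_less_1 by (simp add: powr_realpow)
    then have "t powr y / (1 - t) < \<epsilon>" using m t_less_1 by (simp add: field_simps)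
    moreover have "1 - t powr y / (1 - t) \<le> qt_prod t b y" using qt_prod_ge[OF b, of y] y by simp
    ultimately show ?thesis by linarith
  qed
  then show ?thesis by blast
qed

lemma qt_prod_increment:
  assumes q: "0 \<le> q" "q < 1"
  shows "\<exists>c>0. \<forall>b y. (\<forall>k. b k \<in> {0..q}) \<longrightarrow> -1 \<le> y \<longrightarrow> y < 0 \<longrightarrow>
           c \<le> qt_prod t b (y + 1) - qt_prod t b y"
proof -
  obtain C where C: "C > 0" "\<And>b z. \<forall>k. b k \<in> {0..1} \<Longrightarrow> 0 \<le> z \<Longrightarrow> C \<le> qt_prod t b z"
    using qt_prod_uniformly_pos by blast
  define \<delta> where "\<delta> = (1 - q) * (1 - t) / (2 * (1 + 1 / t))"
  have \<delta>: "\<delta> > 0" unfolding \<delta>_def using q t_pos t_less_1 by (intro divide_pos_pos mult_pos_pos add_pos_pos) auto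
  have "\<delta> * C \<le> qt_prod t b (y + 1) - qt_prod t b y"
    if b: "\<forall>k. b k \<in> {0..q}" and y: "-1 \<le> y" "y < 0" for b y
  proof -
    have b1: "\<forall>k. b k \<in> {0..1}" using b q by (metis atLeastAtMost_iff less_imp_le order_trans)
    then have b1': "\<forall>k. b (Suc k) \<in> {0..1}" by simp
    define R where "R = qt_prod t (\<lambda>k. b (Suc k)) (y + 1 + 1)"
    have R: "C \<le> R" unfolding R_def using C(2)[OF b1'] y by simp
    have "qt_prod t b y \<le> qt_factor t (b 0) y * R"
      unfolding qt_prod_head[OF b1, of y] R_def using b1 b1'
      by (intro mult_left_mono qt_prod_mono less_imp_le[OF qt_factor_pos]) auto
    moreover have "qt_prod t b (y + 1) = qt_factor t (b 0) (y + 1) * R"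
      unfolding R_def by (rule qt_prod_head[OF b1])
    moreover have "\<delta> * C \<le> (qt_factor t (b 0) (y + 1) - qt_factor t (b 0) y) * R"
    proof -
      have "\<delta> \<le> qt_factor t (b 0) (y + 1) - qt_factor t (b 0) y"
        unfolding \<delta>_def using b q y by (intro qt_factor_increment) auto
      then show ?thesis using \<delta> C(1) R by (intro mult_mono) auto
    qed
    ultimately show ?thesis by (simp add: algebra_simps)
  qed
  then show ?thesis using \<delta> C(1) by (intro exI[of _ "\<delta> * C"]) auto
qed

end

section \<open>Partitions\<close>

lemma partitions_le_nonzero_iff:
  assumes lam: "lam \<in> partitions_le n" and i: "1 \<le> i"
  shows "lam i \<noteq> 0 \<longleftrightarrow> i \<le> part_length lam"
proof -
  define S where "S = {i. 1 \<le> i \<and> lam i \<noteq> 0}"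
  have mono: "\<And>i j. 1 \<le> i \<Longrightarrow> i \<le> j \<Longrightarrow> lam j \<le> lam i"
    and zero: "\<And>i. n < i \<Longrightarrow> lam i = 0" using lam unfolding partitions_le_def by auto
  have "S \<subseteq> {..n}" unfolding S_def using zero by (auto simp: not_less[symmetric])
  then have fin: "finite S" by (rule finite_subset) simp
  define m where "m = Max (insert 0 S)"
  have m: "m \<in> insert 0 S" unfolding m_def using fin by (intro Max_in) auto
  have "S = {1..m}"
  proof (intro equalityI subsetI)
    fix j assume "j \<in> S" then show "j \<in> {1..m}" unfolding m_def using fin by (auto simp: S_def)
  next
    fix j assume j: "j \<in> {1..m}"
    then have "m \<in> S" using m by auto
    then show "j \<in> S" using mono[of j m] j by (auto simp: S_def)
  qed
  then have "part_length lam = m" unfolding part_length_def S_def[symmetric] by simp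
  moreover have "lam i \<noteq> 0 \<longleftrightarrow> i \<in> S" using i by (simp add: S_def)
  ultimately show ?thesis using \<open>S = {1..m}\<close> i by simp
qed

lemma part_length_le:
  assumes lam: "lam \<in> partitions_le n"
  shows "part_length lam \<le> n"
proof (rule ccontr)
  assume "\<not> part_length lam \<le> n"
  then have "lam (part_length lam) = 0" using lam by (simp add: partitions_le_def)
  moreover have "lam (part_length lam) \<noteq> 0"
    using partitions_le_nonzero_iff[OF lam, of "part_length lam"] \<open>\<not> part_length lam \<le> n\<close> by simp
  ultimately show False by contradiction
qed

definition part_qcoeff :: "real \<Rightarrow> (nat \<Rightarrow> nat) \<Rightarrow> nat \<Rightarrow> real" where
  "part_qcoeff q lam k = (if k < part_length lam then q ^ lam (part_length lam - k) else 0)"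

lemma part_qcoeff_range:
  assumes lam: "lam \<in> partitions_le n" and q: "0 \<le> q" "q \<le> 1"
  shows "\<forall>k. part_qcoeff q lam k \<in> {0..q}"
proof
  fix k
  show "part_qcoeff q lam k \<in> {0..q}"
  proof (cases "k < part_length lam")
    case True
    then have "lam (part_length lam - k) \<noteq> 0" using partitions_le_nonzero_iff[OF lam] by auto
    then have "q ^ lam (part_length lam - k) \<le> q ^ 1" by (intro power_decreasing q) auto
    then show ?thesis using True q by (simp add: part_qcoeff_def)
  qed (use q in \<open>simp add: part_qcoeff_def\<close>)
qed

lemma phi_eq_qt_prod:
  assumes t: "0 < t" "t < 1" and q: "0 \<le> q" "q \<le> 1" and lam: "lam \<in> partitions_le n"
  shows "phi q t n x lam = qt_prod t (part_qcoeff q lam) (x - eta n lam)"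
proof -
  define l where "l = part_length lam"
  have l: "l \<le> n" using part_length_le[OF lam] by (simp add: l_def)
  define c where "c j = (if j < n then q ^ lam (n - j) else 0)" for j
  have c: "\<forall>j. c j \<in> {0..1}" unfolding c_def using q by (auto intro: power_le_one)
  define f where "f j = qt_factor t (c j) (real j + x)" for j
  have shift: "f (i + (n - l)) = qt_factor t (part_qcoeff q lam i) (real i + (x - eta n lam))" for i
  proof -
    have "c (i + (n - l)) = part_qcoeff q lam i"
      unfolding c_def part_qcoeff_def l_def[symmetric] using l by (auto simp: Suc_diff_le)
    moreover have "real (i + (n - l)) + x = real i + (x - eta n lam)"
      using l by (simp add: eta_def l_def of_nat_diff)
    ultimately show ?thesis unfolding f_def by (simp only:)
  qed
  have "phi q t n x lam = prodinf f"
    unfolding phi_def f_def qt_factor_def c_def by simp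
  also have "\<dots> = (\<Prod>i. f (i + (n - l))) * (\<Prod>i<n - l. f i)"
  proof (rule prodinf_split_initial_segment)
    show "convergent_prod f" unfolding f_def by (rule qt_prod_convergent[OF t c])
    show "f i \<noteq> 0" for i using c qt_factor_pos[OF t] unfolding f_def by (simp add: order_less_imp_not_eq2)
  qed
  also have "(\<Prod>i<n - l. f i) = 1"
  proof (intro prod.neutral ballI)
    fix i assume "i \<in> {..<n - l}"
    then have "i < n" "\<not> n - i \<le> l" by auto
    then have "lam (n - i) = 0" using partitions_le_nonzero_iff[OF lam, of "n - i"] by (simp add: l_def)
    then show "f i = 1" unfolding f_def c_def using \<open>i < n\<close> qt_factor_one[OF t] by simp
  qed
  also have "(\<Prod>i. f (i + (n - l))) = qt_prod t (part_qcoeff q lam) (x - eta n lam)"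
    unfolding qt_prod_def shift ..
  finally show ?thesis by simp
qed

section \<open>Spreading and asymptotic equivalence\<close>

lemma tendsto_zero_if_eventually_bounded:
  fixes u s :: "nat \<Rightarrow> real"
  assumes s: "s \<longlonglongrightarrow> 0"
    and bound: "\<And>\<epsilon>. 0 < \<epsilon> \<Longrightarrow> \<exists>K. \<forall>\<^sub>F n in sequentially. - \<epsilon> \<le> u n \<and> u n \<le> \<epsilon> + K * s n"
  shows "u \<longlonglongrightarrow> 0"
proof (rule tendstoI)
  fix r :: real assume r: "0 < r"
  obtain K where K: "\<forall>\<^sub>F n in sequentially. - (r / 2) \<le> u n \<and> u n \<le> r / 2 + K * s n"
    using bound[of "r / 2"] r by auto
  have "(\<lambda>n. \<bar>K\<bar> * \<bar>s n\<bar>) \<longlonglongrightarrow> 0"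
    using tendsto_mult_right_zero[OF tendsto_rabs_zero[OF s]] .
  then have "\<forall>\<^sub>F n in sequentially. \<bar>K\<bar> * \<bar>s n\<bar> < r / 2"
    using r by (intro order_tendstoD(2)) auto
  with K show "\<forall>\<^sub>F n in sequentially. dist (u n) 0 < r"
  proof eventually_elim
    case (elim n)
    have "K * s n \<le> \<bar>K\<bar> * \<bar>s n\<bar>" by (metis abs_ge_self abs_mult)
    then show ?case using elim r by (simp add: abs_less_iff)
  qed
qed

lemma integrable_measure_pmf_bounded:
  fixes f :: "'a \<Rightarrow> real"
  assumes "\<And>w. w \<in> set_pmf p \<Longrightarrow> \<bar>f w\<bar> \<le> B"
  shows "integrable (measure_pmf p) f"
  by (rule measure_pmf.integrable_const_bound[where B = B]) (auto intro!: AE_pmfI simp: assms)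

lemma integrable_measure_pmf_indicator: "integrable (measure_pmf p) (indicator A :: 'a \<Rightarrow> real)"
  by (rule integrable_measure_pmf_bounded[where B = 1]) (simp add: indicator_def)

lemma expectation_mono_on_support:
  fixes f g :: "'a \<Rightarrow> real"
  assumes "integrable (measure_pmf p) f" "integrable (measure_pmf p) g"
    and "\<And>w. w \<in> set_pmf p \<Longrightarrow> f w \<le> g w"
  shows "measure_pmf.expectation p f \<le> measure_pmf.expectation p g"
  by (rule integral_mono_AE) (auto intro!: AE_pmfI assms)

lemma prob_interval_le_windows:
  assumes "\<And>a. measure_pmf.prob p {w. a < f w \<and> f w \<le> a + 1} \<le> S"
  shows "measure_pmf.prob p {w. a < f w \<and> f w \<le> a + real k} \<le> real k * S"
proof (induction k)
  case 0
  have "{w. a < f w \<and> f w \<le> a + real 0} = {}" by auto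
  then show ?case by (simp only:) simp
next
  case (Suc k)
  let ?I = "{w. a < f w \<and> f w \<le> a + real k}" and ?J = "{w. a + real k < f w \<and> f w \<le> a + real k + 1}"
  have "measure_pmf.prob p {w. a < f w \<and> f w \<le> a + real (Suc k)} \<le> measure_pmf.prob p (?I \<union> ?J)"
    by (intro measure_pmf.finite_measure_mono) auto
  also have "\<dots> \<le> measure_pmf.prob p ?I + measure_pmf.prob p ?J"
    by (rule measure_Un_le) auto
  also have "\<dots> \<le> real k * S + S" using Suc.IH assms[of "a + real k"] by linarith
  finally show ?case by (simp add: algebra_simps)
qed

locale spreading_comparison =
  fixes P :: "nat \<Rightarrow> 'a pmf" and X :: "nat \<Rightarrow> 'a \<Rightarrow> real"
    and ph :: "nat \<Rightarrow> real \<Rightarrow> 'a \<Rightarrow> real" and c :: real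
  assumes ph_mono: "1 \<le> n \<Longrightarrow> w \<in> set_pmf (P n) \<Longrightarrow> x \<le> y \<Longrightarrow>
      0 \<le> ph n x w \<and> ph n x w \<le> ph n y w \<and> ph n y w \<le> 1"
    and ph_small: "0 < \<epsilon> \<Longrightarrow> \<exists>M. \<forall>n x w. 1 \<le> n \<longrightarrow> w \<in> set_pmf (P n) \<longrightarrow>
      M < X n w - x \<longrightarrow> ph n x w < \<epsilon>"
    and ph_large: "0 < \<epsilon> \<Longrightarrow> \<exists>M. \<forall>n x w. 1 \<le> n \<longrightarrow> w \<in> set_pmf (P n) \<longrightarrow>
      X n w - x < - M \<longrightarrow> 1 - \<epsilon> < ph n x w"
    and c_pos: "0 < c"
    and ph_jump: "1 \<le> n \<Longrightarrow> w \<in> set_pmf (P n) \<Longrightarrow> x < X n w \<Longrightarrow> X n w \<le> x + 1 \<Longrightarrow>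
      c \<le> ph n (x + 1) w - ph n x w"
    and X_bdd_below: "1 \<le> n \<Longrightarrow> bdd_below (X n ` set_pmf (P n))"
begin

definition F :: "nat \<Rightarrow> real \<Rightarrow> real" where
  "F n x = measure_pmf.expectation (P n) (ph n x)"

definition window :: "nat \<Rightarrow> real \<Rightarrow> real" where
  "window n x = measure_pmf.prob (P n) {w. x < X n w \<and> X n w \<le> x + 1}"

definition max_window :: "nat \<Rightarrow> real" where
  "max_window n = (SUP x. window n x)"

lemma integrable_ph: "1 \<le> n \<Longrightarrow> integrable (measure_pmf (P n)) (ph n x)"
  using ph_mono[of n _ x x] by (intro integrable_measure_pmf_bounded[where B = 1]) auto

lemma F_mono: "1 \<le> n \<Longrightarrow> x \<le> y \<Longrightarrow> F n x \<le> F n y"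
  unfolding F_def using ph_mono by (intro expectation_mono_on_support integrable_ph) auto

lemma F_bounds: "1 \<le> n \<Longrightarrow> 0 \<le> F n x \<and> F n x \<le> 1"
proof
  assume n: "1 \<le> n"
  show "0 \<le> F n x"
    unfolding F_def using ph_mono[OF n] by (intro integral_nonneg_AE AE_pmfI) auto
  have "F n x \<le> measure_pmf.expectation (P n) (\<lambda>w. 1)"
    unfolding F_def using ph_mono[OF n] by (intro expectation_mono_on_support integrable_ph n) auto
  then show "F n x \<le> 1" by simp
qed

lemma bdd_above_F_increment: "1 \<le> n \<Longrightarrow> bdd_above (range (\<lambda>x. F n (x + 1) - F n x))"
  using F_bounds by (intro bdd_aboveI2[where M = 1]) (smt (verit))

lemma window_le_max_window: "window n x \<le> max_window n"
  unfolding max_window_def by (rule cSUP_upper) (auto intro: bdd_aboveI2[where M = 1] simp: window_def)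

lemma max_window_nonneg: "0 \<le> max_window n"
proof -
  have "0 \<le> window n 0" by (simp add: window_def)
  then show ?thesis using window_le_max_window[of n 0] by linarith
qed

lemma prob_interval_le_max_window:
  "measure_pmf.prob (P n) {w. a < X n w \<and> X n w \<le> a + real k} \<le> real k * max_window n"
  using window_le_max_window by (intro prob_interval_le_windows) (simp add: window_def)

lemma window_le_F_increment:
  assumes n: "1 \<le> n"
  shows "c * window n x \<le> F n (x + 1) - F n x"
proof -
  let ?A = "{w. x < X n w \<and> X n w \<le> x + 1}"
  have "c * window n x = measure_pmf.expectation (P n) (\<lambda>w. c * indicator ?A w)"
    unfolding window_def by simp
  also have "\<dots> \<le> measure_pmf.expectation (P n) (\<lambda>w. ph n (x + 1) w - ph n x w)"
  proof (rule expectation_mono_on_support)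
    show "integrable (measure_pmf (P n)) (\<lambda>w. c * indicator ?A w)"
      by (intro integrable_mult_right integrable_measure_pmf_indicator)
    show "integrable (measure_pmf (P n)) (\<lambda>w. ph n (x + 1) w - ph n x w)"
      by (intro Bochner_Integration.integrable_diff integrable_ph n)
    show "c * indicator ?A w \<le> ph n (x + 1) w - ph n x w" if "w \<in> set_pmf (P n)" for w
      using ph_jump[OF n that] ph_mono[OF n that, of x "x + 1"] by (auto simp: indicator_def)
  qed
  also have "\<dots> = F n (x + 1) - F n x" unfolding F_def using integrable_ph[OF n] by simp
  finally show ?thesis .
qed

lemma F_increment_le:
  assumes "0 < \<epsilon>"
  shows "\<exists>K. \<forall>n x. 1 \<le> n \<longrightarrow> F n (x + 1) - F n x \<le> \<epsilon> + K * max_window n"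
proof -
  obtain M1 where M1: "\<And>n x w. 1 \<le> n \<Longrightarrow> w \<in> set_pmf (P n) \<Longrightarrow> M1 < X n w - x \<Longrightarrow> ph n x w < \<epsilon>"
    using ph_small[OF assms] by blast
  obtain M2 where M2: "\<And>n x w. 1 \<le> n \<Longrightarrow> w \<in> set_pmf (P n) \<Longrightarrow> X n w - x < - M2 \<Longrightarrow> 1 - \<epsilon> < ph n x w"
    using ph_large[OF assms] by blast
  define N where "N = nat \<lceil>max M1 M2\<rceil>"
  have N: "M1 \<le> real N" "M2 \<le> real N" unfolding N_def by linarith+
  have "F n (x + 1) - F n x \<le> \<epsilon> + real (2 * N + 2) * max_window n" if n: "1 \<le> n" for n x
  proof -
    define a where "a = x - real N - 1"
    let ?A = "{w. a < X n w \<and> X n w \<le> a + real (2 * N + 2)}"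
    have "ph n (x + 1) w - ph n x w \<le> \<epsilon> + indicator ?A w" if w: "w \<in> set_pmf (P n)" for w
    proof -
      have ph: "0 \<le> ph n x w" "ph n x w \<le> ph n (x + 1) w" "ph n (x + 1) w \<le> 1"
        using ph_mono[OF n w, of x "x + 1"] by auto
      consider "real N + 1 < X n w - x" | "X n w - x < - real N" | "w \<in> ?A"
        unfolding a_def by fastforce
      then show ?thesis
      proof cases
        case 1
        then have "ph n (x + 1) w < \<epsilon>" using M1[OF n w, of "x + 1"] N by simp
        then show ?thesis using ph by (simp add: indicator_def)
      next
        case 2
        then have "1 - \<epsilon> < ph n x w" using M2[OF n w, of x] N by simp
        then show ?thesis using ph by (simp add: indicator_def)
      qed (use ph assms in simp)
    qed
    then have "measure_pmf.expectation (P n) (\<lambda>w. ph n (x + 1) w - ph n x w) \<le>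
        measure_pmf.expectation (P n) (\<lambda>w. \<epsilon> + indicator ?A w)"
      by (intro expectation_mono_on_support Bochner_Integration.integrable_diff
          Bochner_Integration.integrable_add integrable_ph n integrable_measure_pmf_indicator) auto
    then have "F n (x + 1) - F n x \<le> measure_pmf.expectation (P n) (\<lambda>w. \<epsilon> + indicator ?A w)"
      unfolding F_def using integrable_ph[OF n] by simp
    also have "\<dots> = \<epsilon> + measure_pmf.prob (P n) ?A" by (simp add: integrable_measure_pmf_indicator)
    also have "\<dots> \<le> \<epsilon> + real (2 * N + 2) * max_window n"
      using prob_interval_le_max_window[of n a "2 * N + 2"] by simp
    finally show ?thesis .
  qed
  then show ?thesis by blast
qed

lemma cdf_minus_F_le:
  assumes "0 < \<epsilon>"
  shows "\<exists>K. \<forall>n x. 1 \<le> n \<longrightarrow> measure_pmf.prob (P n) {w. X n w \<le> x} - F n x \<le> \<epsilon> + K * max_window n"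
proof -
  obtain M where M: "\<And>n x w. 1 \<le> n \<Longrightarrow> w \<in> set_pmf (P n) \<Longrightarrow> X n w - x < - M \<Longrightarrow> 1 - \<epsilon> < ph n x w"
    using ph_large[OF assms] by blast
  define N where "N = nat \<lceil>M\<rceil>"
  have N: "M \<le> real N" unfolding N_def by linarith
  have "measure_pmf.prob (P n) {w. X n w \<le> x} - F n x \<le> \<epsilon> + real (N + 1) * max_window n"
    if n: "1 \<le> n" for n x
  proof -
    define a where "a = x - real N - 1"
    let ?A = "{w. a < X n w \<and> X n w \<le> a + real (N + 1)}"
    have "indicator {w. X n w \<le> x} w - ph n x w \<le> \<epsilon> + indicator ?A w"
      if w: "w \<in> set_pmf (P n)" for w
    proof -
      have ph: "0 \<le> ph n x w" "ph n x w \<le> 1" using ph_mono[OF n w, of x x] by auto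
      consider "x < X n w" | "X n w - x < - real N" | "w \<in> ?A"
        unfolding a_def by fastforce
      then show ?thesis
      proof cases
        case 2
        then have "1 - \<epsilon> < ph n x w" using M[OF n w, of x] N by simp
        then show ?thesis using ph by (simp add: indicator_def)
      qed (use ph assms in \<open>auto simp: indicator_def\<close>)
    qed
    then have "measure_pmf.expectation (P n) (\<lambda>w. indicator {w. X n w \<le> x} w - ph n x w) \<le>
        measure_pmf.expectation (P n) (\<lambda>w. \<epsilon> + indicator ?A w)"
      by (intro expectation_mono_on_support Bochner_Integration.integrable_diff
          Bochner_Integration.integrable_add integrable_ph n integrable_measure_pmf_indicator) auto
    then have "measure_pmf.prob (P n) {w. X n w \<le> x} - F n x \<le> \<epsilon> + measure_pmf.prob (P n) ?A"
      unfolding F_def using integrable_ph[OF n] by (simp add: integrable_measure_pmf_indicator)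
    also have "\<dots> \<le> \<epsilon> + real (N + 1) * max_window n"
      using prob_interval_le_max_window[of n a "N + 1"] by simp
    finally show ?thesis .
  qed
  then show ?thesis by blast
qed

lemma ex_F_le:
  assumes n: "1 \<le> n" and "0 < \<epsilon>"
  shows "\<exists>x. F n x \<le> \<epsilon>"
proof -
  obtain M where M: "\<And>x w. w \<in> set_pmf (P n) \<Longrightarrow> M < X n w - x \<Longrightarrow> ph n x w < \<epsilon>"
    using ph_small[OF assms(2)] n by blast
  obtain B where B: "\<And>w. w \<in> set_pmf (P n) \<Longrightarrow> B \<le> X n w"
    using X_bdd_below[OF n] by (auto simp: bdd_below_def)
  have "F n (B - M - 1) \<le> measure_pmf.expectation (P n) (\<lambda>w. \<epsilon>)"
    unfolding F_def using M B by (intro expectation_mono_on_support integrable_ph n less_imp_le) force+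
  then show ?thesis by auto
qed

lemma spreads_rv_iff: "spreads_rv P X \<longleftrightarrow> max_window \<longlonglongrightarrow> 0"
  unfolding spreads_rv_def max_window_def window_def ..

lemma spreads_fun_imp_spreads_rv:
  assumes "spreads_fun (\<lambda>n x. measure_pmf.expectation (P n) (ph n x))"
  shows "spreads_rv P X"
proof -
  define SF where "SF n = (SUP x. F n (x + 1) - F n x)" for n
  have SF: "SF \<longlonglongrightarrow> 0" using assms unfolding spreads_fun_def SF_def F_def .
  have "window n x \<le> SF n / c" if n: "1 \<le> n" for n x
  proof -
    have "F n (x + 1) - F n x \<le> SF n"
      unfolding SF_def by (rule cSUP_upper[OF _ bdd_above_F_increment[OF n]]) simp
    then have "c * window n x \<le> SF n" using window_le_F_increment[OF n, of x] by linarith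
    then show ?thesis using c_pos by (simp add: pos_le_divide_eq mult.commute)
  qed
  then have "max_window n \<le> SF n / c" if "1 \<le> n" for n
    unfolding max_window_def using that by (intro cSUP_least) auto
  then have upper: "\<forall>\<^sub>F n in sequentially. max_window n \<le> SF n / c"
    by (auto simp: eventually_sequentially)
  have lower: "\<forall>\<^sub>F n in sequentially. 0 \<le> max_window n" by (simp add: max_window_nonneg)
  show ?thesis unfolding spreads_rv_iff
    by (rule tendsto_sandwich[OF lower upper tendsto_const tendsto_divide_zero[OF SF]])
qed

lemma spreads_rv_imp_spreads_fun:
  assumes "spreads_rv P X"
  shows "spreads_fun (\<lambda>n x. measure_pmf.expectation (P n) (ph n x))"
  unfolding spreads_fun_def F_def[symmetric]
proof (rule tendsto_zero_if_eventually_bounded)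
  show "max_window \<longlonglongrightarrow> 0" using assms by (simp add: spreads_rv_iff)
  fix \<epsilon> :: real assume e: "0 < \<epsilon>"
  obtain K where K: "\<And>n x. 1 \<le> n \<Longrightarrow> F n (x + 1) - F n x \<le> \<epsilon> + K * max_window n"
    using F_increment_le[OF e] by blast
  have "- \<epsilon> \<le> (SUP x. F n (x + 1) - F n x) \<and> (SUP x. F n (x + 1) - F n x) \<le> \<epsilon> + K * max_window n"
    if n: "1 \<le> n" for n
  proof
    have "- \<epsilon> \<le> F n (0 + 1) - F n 0" using F_mono[OF n, of 0 1] e by simp
    also have "\<dots> \<le> (SUP x. F n (x + 1) - F n x)" by (rule cSUP_upper[OF _ bdd_above_F_increment[OF n]]) simp
    finally show "- \<epsilon> \<le> (SUP x. F n (x + 1) - F n x)" .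
    show "(SUP x. F n (x + 1) - F n x) \<le> \<epsilon> + K * max_window n" by (rule cSUP_least) (auto intro: K n)
  qed
  then show "\<exists>K. \<forall>\<^sub>F n in sequentially. - \<epsilon> \<le> (SUP x. F n (x + 1) - F n x) \<and>
      (SUP x. F n (x + 1) - F n x) \<le> \<epsilon> + K * max_window n"
    by (auto simp: eventually_sequentially)
qed

lemma spreads_rv_imp_cdf_close:
  assumes "spreads_rv P X"
  shows "(\<lambda>n. SUP x. measure_pmf.prob (P n) {w. X n w \<le> x} - F n x) \<longlonglongrightarrow> 0"
proof (rule tendsto_zero_if_eventually_bounded)
  show "max_window \<longlonglongrightarrow> 0" using assms by (simp add: spreads_rv_iff)
  fix \<epsilon> :: real assume e: "0 < \<epsilon>"
  obtain K where K: "\<And>n x. 1 \<le> n \<Longrightarrow> measure_pmf.prob (P n) {w. X n w \<le> x} - F n x \<le> \<epsilon> + K * max_window n"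
    using cdf_minus_F_le[OF e] by blast
  let ?D = "\<lambda>n. SUP x. measure_pmf.prob (P n) {w. X n w \<le> x} - F n x"
  have "- \<epsilon> \<le> ?D n \<and> ?D n \<le> \<epsilon> + K * max_window n" if n: "1 \<le> n" for n
  proof
    have bdd: "bdd_above (range (\<lambda>x. measure_pmf.prob (P n) {w. X n w \<le> x} - F n x))"
      using F_bounds[OF n] by (intro bdd_aboveI2[where M = 1]) (smt (verit) measure_pmf.prob_le_1)
    obtain x0 where "F n x0 \<le> \<epsilon>" using ex_F_le[OF n e] by blast
    moreover have "0 \<le> measure_pmf.prob (P n) {w. X n w \<le> x0}" by simp
    ultimately have "- \<epsilon> \<le> measure_pmf.prob (P n) {w. X n w \<le> x0} - F n x0" by linarith
    also have "\<dots> \<le> ?D n" by (rule cSUP_upper[OF _ bdd]) simp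
    finally show "- \<epsilon> \<le> ?D n" .
    show "?D n \<le> \<epsilon> + K * max_window n" by (rule cSUP_least) (auto intro: K n)
  qed
  then show "\<exists>K. \<forall>\<^sub>F n in sequentially. - \<epsilon> \<le> ?D n \<and> ?D n \<le> \<epsilon> + K * max_window n"
    by (auto simp: eventually_sequentially)
qed

theorem asymp_equivalent: "asymp_equivalent P X (\<lambda>n x. measure_pmf.expectation (P n) (ph n x))"
  unfolding asymp_equivalent_def
  using spreads_fun_imp_spreads_rv spreads_rv_imp_spreads_fun spreads_rv_imp_cdf_close[unfolded F_def]
  by blast

end

context
  fixes q t :: real
  assumes q: "0 \<le> q" "q < 1" and t: "0 < t" "t < 1"
begin

lemma part_qcoeff_range_q: "lam \<in> partitions_le n \<Longrightarrow> \<forall>k. part_qcoeff q lam k \<in> {0..q}"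
  using part_qcoeff_range q less_imp_le by blast

lemma part_qcoeff_range_1: "lam \<in> partitions_le n \<Longrightarrow> \<forall>k. part_qcoeff q lam k \<in> {0..1}"
  using part_qcoeff_range_q q by (meson atLeastAtMost_iff less_imp_le order_trans)

lemma phi_eq: "lam \<in> partitions_le n \<Longrightarrow> phi q t n x lam = qt_prod t (part_qcoeff q lam) (x - eta n lam)"
  using phi_eq_qt_prod[OF t q(1)] q(2) by simp

lemma phi_mono_bounds:
  assumes "lam \<in> partitions_le n" "x \<le> y"
  shows "0 \<le> phi q t n x lam \<and> phi q t n x lam \<le> phi q t n y lam \<and> phi q t n y lam \<le> 1"
  using qt_prod_nonneg[OF t] qt_prod_le_one[OF t] qt_prod_mono[OF t] part_qcoeff_range_1[OF assms(1)] assms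
  by (simp add: phi_eq)

lemma phi_small:
  assumes "0 < \<epsilon>"
  shows "\<exists>M. \<forall>n x lam. lam \<in> partitions_le n \<longrightarrow> M < eta n lam - x \<longrightarrow> phi q t n x lam < \<epsilon>"
proof -
  obtain M where "\<And>b y. \<forall>k. b k \<in> {0..q} \<Longrightarrow> y < - M \<Longrightarrow> qt_prod t b y < \<epsilon>"
    using qt_prod_small[OF t q assms] by blast
  then show ?thesis using part_qcoeff_range_q by (intro exI[of _ M]) (auto simp: phi_eq)
qed

lemma phi_large:
  assumes "0 < \<epsilon>"
  shows "\<exists>M. \<forall>n x lam. lam \<in> partitions_le n \<longrightarrow> eta n lam - x < - M \<longrightarrow> 1 - \<epsilon> < phi q t n x lam"
proof -
  obtain M where "\<And>b y. \<forall>k. b k \<in> {0..1} \<Longrightarrow> M < y \<Longrightarrow> 1 - \<epsilon> < qt_prod t b y"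
    using qt_prod_large[OF t assms] by blast
  then show ?thesis using part_qcoeff_range_1 by (intro exI[of _ M]) (auto simp: phi_eq)
qed

lemma phi_jump:
  "\<exists>c>0. \<forall>n x lam. lam \<in> partitions_le n \<longrightarrow> x < eta n lam \<longrightarrow> eta n lam \<le> x + 1 \<longrightarrow>
     c \<le> phi q t n (x + 1) lam - phi q t n x lam"
proof -
  obtain c where "c > 0" and c: "\<And>b y. \<forall>k. b k \<in> {0..q} \<Longrightarrow> -1 \<le> y \<Longrightarrow> y < 0 \<Longrightarrow>
      c \<le> qt_prod t b (y + 1) - qt_prod t b y"
    using qt_prod_increment[OF t q] by blast
  have "c \<le> phi q t n (x + 1) lam - phi q t n x lam"
    if "lam \<in> partitions_le n" "x < eta n lam" "eta n lam \<le> x + 1" for n x lam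
    using c[OF part_qcoeff_range_q[OF that(1)], of "x - eta n lam"] that
    by (simp add: phi_eq algebra_simps)
  then show ?thesis using \<open>c > 0\<close> by blast
qed

lemma spreading_comparison_phi:
  assumes support: "\<And>n. 1 \<le> n \<Longrightarrow> set_pmf (P n) \<subseteq> partitions_le n" and "0 < c"
    and jump: "\<forall>n x lam. lam \<in> partitions_le n \<longrightarrow> x < eta n lam \<longrightarrow> eta n lam \<le> x + 1 \<longrightarrow>
      c \<le> phi q t n (x + 1) lam - phi q t n x lam"
  shows "spreading_comparison P eta (\<lambda>n x lam. phi q t n x lam) c"
proof
  show "0 \<le> phi q t n x w \<and> phi q t n x w \<le> phi q t n y w \<and> phi q t n y w \<le> 1"
    if "1 \<le> n" "w \<in> set_pmf (P n)" "x \<le> y" for n w x y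
    using phi_mono_bounds support that by blast
next
  fix \<epsilon> :: real assume "0 < \<epsilon>"
  then obtain M where "\<forall>n x lam. lam \<in> partitions_le n \<longrightarrow> M < eta n lam - x \<longrightarrow> phi q t n x lam < \<epsilon>"
    using phi_small by blast
  then show "\<exists>M. \<forall>n x w. 1 \<le> n \<longrightarrow> w \<in> set_pmf (P n) \<longrightarrow> M < eta n w - x \<longrightarrow> phi q t n x w < \<epsilon>"
    using support by blast
next
  fix \<epsilon> :: real assume "0 < \<epsilon>"
  then obtain M where "\<forall>n x lam. lam \<in> partitions_le n \<longrightarrow> eta n lam - x < - M \<longrightarrow> 1 - \<epsilon> < phi q t n x lam"
    using phi_large by blast
  then show "\<exists>M. \<forall>n x w. 1 \<le> n \<longrightarrow> w \<in> set_pmf (P n) \<longrightarrow> eta n w - x < - M \<longrightarrow> 1 - \<epsilon> < phi q t n x w"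
    using support by blast
next
  show "0 < c" by fact
next
  show "c \<le> phi q t n (x + 1) w - phi q t n x w"
    if "1 \<le> n" "w \<in> set_pmf (P n)" "x < eta n w" "eta n w \<le> x + 1" for n w x
    using jump support that by blast
next
  show "bdd_below (eta n ` set_pmf (P n))" for n
    by (rule bdd_belowI[of _ "- real n"]) (auto simp: eta_def)
qed

end

theorem proposition5p6:
  fixes q t :: real and P :: "nat \<Rightarrow> (nat \<Rightarrow> nat) pmf"
  assumes "0 \<le> q" "q < 1" "0 < t" "t < 1"
    and "\<And>n. 1 \<le> n \<Longrightarrow> set_pmf (P n) \<subseteq> partitions_le n"
  shows "(\<forall>n x y lam. 1 \<le> n \<longrightarrow> lam \<in> partitions_le n \<longrightarrow> x \<le> y \<longrightarrow>
            0 \<le> phi q t n x lam \<and> phi q t n x lam \<le> phi q t n y lam \<and> phi q t n y lam \<le> 1)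
       \<and> (\<forall>\<epsilon>>0. \<exists>M. \<forall>n x lam. 1 \<le> n \<longrightarrow> lam \<in> partitions_le n \<longrightarrow>
            eta n lam - x > M \<longrightarrow> phi q t n x lam < \<epsilon>)
       \<and> (\<forall>\<epsilon>>0. \<exists>M. \<forall>n x lam. 1 \<le> n \<longrightarrow> lam \<in> partitions_le n \<longrightarrow>
            eta n lam - x < - M \<longrightarrow> phi q t n x lam > 1 - \<epsilon>)
       \<and> (\<exists>c>0. \<forall>n x lam. 1 \<le> n \<longrightarrow> lam \<in> partitions_le n \<longrightarrow>
            x < eta n lam \<longrightarrow> eta n lam \<le> x + 1 \<longrightarrow> phi q t n (x + 1) lam - phi q t n x lam \<ge> c)
       \<and> asymp_equivalent P eta
           (\<lambda>n x. measure_pmf.expectation (P n) (\<lambda>lam. phi q t n x lam))"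
proof -
  note qt = assms(1-4) and support = assms(5)
  obtain c where "c > 0" and jump: "\<forall>n x lam. lam \<in> partitions_le n \<longrightarrow> x < eta n lam \<longrightarrow>
      eta n lam \<le> x + 1 \<longrightarrow> c \<le> phi q t n (x + 1) lam - phi q t n x lam"
    using phi_jump[OF qt] by blast
  interpret spreading_comparison P eta "\<lambda>n x lam. phi q t n x lam" c
    using spreading_comparison_phi[OF qt support \<open>c > 0\<close> jump] .
  show ?thesis
  proof (intro conjI)
    show "\<forall>n x y lam. 1 \<le> n \<longrightarrow> lam \<in> partitions_le n \<longrightarrow> x \<le> y \<longrightarrow>
        0 \<le> phi q t n x lam \<and> phi q t n x lam \<le> phi q t n y lam \<and> phi q t n y lam \<le> 1"
      using phi_mono_bounds[OF qt] by blast
    show "\<forall>\<epsilon>>0. \<exists>M. \<forall>n x lam. 1 \<le> n \<longrightarrow> lam \<in> partitions_le n \<longrightarrow>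
        eta n lam - x > M \<longrightarrow> phi q t n x lam < \<epsilon>"
      using phi_small[OF qt] by blast
    show "\<forall>\<epsilon>>0. \<exists>M. \<forall>n x lam. 1 \<le> n \<longrightarrow> lam \<in> partitions_le n \<longrightarrow>
        eta n lam - x < - M \<longrightarrow> phi q t n x lam > 1 - \<epsilon>"
      using phi_large[OF qt] by blast
    show "\<exists>c>0. \<forall>n x lam. 1 \<le> n \<longrightarrow> lam \<in> partitions_le n \<longrightarrow>
        x < eta n lam \<longrightarrow> eta n lam \<le> x + 1 \<longrightarrow> phi q t n (x + 1) lam - phi q t n x lam \<ge> c"
      using jump \<open>c > 0\<close> by blast
  qed (rule asymp_equivalent)
qed

end
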